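(* For any fitness graph $\mathcal{G}=(G,(m,r))$ and any seed sets $S\subseteq S'\subseteq V$, we have $\operatorname{fp}_{\mathcal{G}}(S)\le\operatorname{fp}_{\mathcal{G}}(S')$.
   Context: A fitness graph is $\mathcal{G}=(G,(m,r))$ where $G=(V,E,w)$ is a strongly connected directed graph, $w(u,\cdot)$ is a probability distribution over out-neighbours of $u$, and $r,m\colon V\to(0,\infty)$ are resident and mutant fitness functions. For a configuration (set of mutants) $X\subseteq V$, $f_X(u)=m(u)$ if $u\in X$, else $r(u)$. The Heterogeneous Moran process starts at $\mathcal{X}_0=S$; from $\mathcal{X}_t=X$ it picks $u$ with probability $f_X(u)/\sum_v f_X(v)$, then $v$ with probability $w(u,v)$, and $v$ takes the type of $u$. $\operatorname{fp}_{\mathcal{G}}(S)$ is the probability that the process eventually reaches $V$. *)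

theory Defs
  imports Main "HOL.Real"
begin

definition fitness_graph ::
  "'v set \<Rightarrow> ('v \<times> 'v) set \<Rightarrow> ('v \<Rightarrow> 'v \<Rightarrow> real) \<Rightarrow> ('v \<Rightarrow> real) \<Rightarrow> ('v \<Rightarrow> real) \<Rightarrow> bool"
  where "fitness_graph V E w r m \<longleftrightarrow>
     finite V \<and> V \<noteq> {} \<and> E \<subseteq> V \<times> V \<and>
     (\<forall>u\<in>V. \<forall>v\<in>V. w u v \<ge> 0 \<and> (w u v > 0 \<longleftrightarrow> (u, v) \<in> E)) \<and>
     (\<forall>u\<in>V. (\<Sum>v\<in>V. w u v) = 1) \<and>
     (\<forall>u\<in>V. \<forall>v\<in>V. (u, v) \<in> E\<^sup>*) \<and>
     (\<forall>u\<in>V. r u > 0 \<and> m u > 0)"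

definition fit :: "('v \<Rightarrow> real) \<Rightarrow> ('v \<Rightarrow> real) \<Rightarrow> 'v set \<Rightarrow> 'v \<Rightarrow> real"
  where "fit r m X u = (if u \<in> X then m u else r u)"

definition moran_update :: "'v set \<Rightarrow> 'v \<Rightarrow> 'v \<Rightarrow> 'v set"
  where "moran_update X u v = (if u \<in> X then insert v X else X - {v})"

definition trans_prob ::
  "'v set \<Rightarrow> ('v \<Rightarrow> 'v \<Rightarrow> real) \<Rightarrow> ('v \<Rightarrow> real) \<Rightarrow> ('v \<Rightarrow> real) \<Rightarrow> 'v set \<Rightarrow> 'v set \<Rightarrow> real"
  where "trans_prob V w r m X Y =
    (\<Sum>u\<in>V. \<Sum>v\<in>V. if moran_update X u v = Y
        then fit r m X u / (\<Sum>x\<in>V. fit r m X x) * w u v else 0)"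

fun hit_within ::
  "'v set \<Rightarrow> ('v \<Rightarrow> 'v \<Rightarrow> real) \<Rightarrow> ('v \<Rightarrow> real) \<Rightarrow> ('v \<Rightarrow> real) \<Rightarrow> nat \<Rightarrow> 'v set \<Rightarrow> real"
  where
    "hit_within V w r m 0 X = (if X = V then 1 else 0)"
  | "hit_within V w r m (Suc n) X =
       (if X = V then 1 else (\<Sum>Y\<in>Pow V. trans_prob V w r m X Y * hit_within V w r m n Y))"

definition fp ::
  "'v set \<Rightarrow> ('v \<Rightarrow> 'v \<Rightarrow> real) \<Rightarrow> ('v \<Rightarrow> real) \<Rightarrow> ('v \<Rightarrow> real) \<Rightarrow> 'v set \<Rightarrow> real"
  where "fp V w r m S = (SUP n. hit_within V w r m n S)"

end

theory Submission
  imports Defs Complex_Main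
begin

text \<open>The fixation probability is the least nonnegative function that equals 1 at V and is
  superharmonic for the Moran step away from V.  It therefore suffices to show that the
  largest monotone minorant \<open>\<psi> Z = min {fp Y | Z \<subseteq> Y \<subseteq> V}\<close> of fp is superharmonic, for
  then \<open>fp S \<le> \<psi> S \<le> fp S'\<close>.  To see this, uniformise time: the resulting lazy step
  differs from the Moran step only by holding, and it preserves monotone functions.
  Comparing the lazy step of \<psi> at X with that at a minimiser \<open>Y \<supseteq> X\<close>, where \<open>\<psi> Y = fp Y\<close>
  and fp is harmonic, yields the superharmonicity of \<psi>.\<close>

lemma fitness_graphD:
  assumes "fitness_graph V E w r m"
  shows "finite V" "V \<noteq> {}" "\<And>u v. u \<in> V \<Longrightarrow> v \<in> V \<Longrightarrow> 0 \<le> w u v"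
    "\<And>u. u \<in> V \<Longrightarrow> (\<Sum>v\<in>V. w u v) = 1"
    "\<And>u. u \<in> V \<Longrightarrow> 0 < r u" "\<And>u. u \<in> V \<Longrightarrow> 0 < m u"
  using assms unfolding fitness_graph_def by auto

definition total_fit :: "'v set \<Rightarrow> ('v \<Rightarrow> real) \<Rightarrow> ('v \<Rightarrow> real) \<Rightarrow> 'v set \<Rightarrow> real"
  where "total_fit V r m X = (\<Sum>x\<in>V. fit r m X x)"

definition expect_next ::
  "'v set \<Rightarrow> ('v \<Rightarrow> 'v \<Rightarrow> real) \<Rightarrow> ('v \<Rightarrow> real) \<Rightarrow> ('v \<Rightarrow> real) \<Rightarrow> ('v set \<Rightarrow> real) \<Rightarrow> 'v set \<Rightarrow> real"
  where "expect_next V w r m \<phi> X = (\<Sum>Y\<in>Pow V. trans_prob V w r m X Y * \<phi> Y)"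

lemma fit_pos: "fitness_graph V E w r m \<Longrightarrow> u \<in> V \<Longrightarrow> 0 < fit r m X u"
  using fitness_graphD(5,6) unfolding fit_def by auto

lemma total_fit_pos:
  assumes "fitness_graph V E w r m"
  shows "0 < total_fit V r m X"
  unfolding total_fit_def using fitness_graphD(1,2)[OF assms] fit_pos[OF assms]
  by (intro sum_pos) auto

lemma total_fit_le:
  assumes "fitness_graph V E w r m"
  shows "total_fit V r m X \<le> (\<Sum>u\<in>V. r u + m u)"
  unfolding total_fit_def fit_def using fitness_graphD(5,6)[OF assms]
  by (intro sum_mono) (auto intro: less_imp_le)

lemma moran_update_subset: "X \<subseteq> V \<Longrightarrow> v \<in> V \<Longrightarrow> moran_update X u v \<subseteq> V"
  unfolding moran_update_def by auto

lemma total_fit_mult_expect_next: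
  assumes fg: "fitness_graph V E w r m" and X: "X \<subseteq> V"
  shows "total_fit V r m X * expect_next V w r m \<phi> X
    = (\<Sum>u\<in>V. fit r m X u * (\<Sum>v\<in>V. w u v * \<phi> (moran_update X u v)))"
proof -
  let ?p = "\<lambda>u v. fit r m X u / total_fit V r m X * w u v"
  have "expect_next V w r m \<phi> X
      = (\<Sum>Y\<in>Pow V. \<Sum>u\<in>V. \<Sum>v\<in>V. if moran_update X u v = Y then ?p u v * \<phi> Y else 0)"
    unfolding expect_next_def trans_prob_def total_fit_def sum_distrib_right
    by (intro sum.cong refl) auto
  also have "\<dots> = (\<Sum>u\<in>V. \<Sum>v\<in>V. \<Sum>Y\<in>Pow V. if moran_update X u v = Y then ?p u v * \<phi> Y else 0)"
    by (subst sum.swap) (simp add: sum.swap[of _ "Pow V" V])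
  also have "\<dots> = (\<Sum>u\<in>V. \<Sum>v\<in>V. ?p u v * \<phi> (moran_update X u v))"
    using fitness_graphD(1)[OF fg] moran_update_subset[OF X]
    by (intro sum.cong refl) (simp add: sum.delta)
  finally show ?thesis
    using total_fit_pos[OF fg, of X]
    by (simp add: sum_distrib_left sum_divide_distrib field_simps)
qed

lemma trans_prob_nonneg:
  assumes fg: "fitness_graph V E w r m"
  shows "0 \<le> trans_prob V w r m X Y"
  unfolding trans_prob_def total_fit_def[symmetric]
  using fit_pos[OF fg] fitness_graphD(3)[OF fg] total_fit_pos[OF fg, of X]
  by (intro sum_nonneg)
    (auto intro!: divide_nonneg_pos mult_nonneg_nonneg intro: less_imp_le)

lemma expect_next_eq_const:
  assumes fg: "fitness_graph V E w r m" and X: "X \<subseteq> V"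
    and const: "\<And>u v. u \<in> V \<Longrightarrow> v \<in> V \<Longrightarrow> \<phi> (moran_update X u v) = c"
  shows "expect_next V w r m \<phi> X = c"
proof -
  have "total_fit V r m X * expect_next V w r m \<phi> X
      = (\<Sum>u\<in>V. fit r m X u * (\<Sum>v\<in>V. w u v * c))"
    using const by (simp add: total_fit_mult_expect_next[OF fg X])
  also have "\<dots> = total_fit V r m X * c"
    using fitness_graphD(4)[OF fg]
    by (simp add: total_fit_def sum_distrib_right[symmetric] sum_distrib_left)
  finally show ?thesis using total_fit_pos[OF fg, of X] by simp
qed

lemma expect_next_const:
  "fitness_graph V E w r m \<Longrightarrow> X \<subseteq> V \<Longrightarrow> expect_next V w r m (\<lambda>_. c) X = c"
  by (rule expect_next_eq_const) auto

lemma expect_next_top: "fitness_graph V E w r m \<Longrightarrow> expect_next V w r m \<phi> V = \<phi> V"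
  by (rule expect_next_eq_const) (auto simp: moran_update_def insert_absorb)

lemma expect_next_mono:
  assumes "fitness_graph V E w r m" and "\<And>Y. Y \<subseteq> V \<Longrightarrow> \<phi> Y \<le> \<psi> Y"
  shows "expect_next V w r m \<phi> X \<le> expect_next V w r m \<psi> X"
  unfolding expect_next_def using assms trans_prob_nonneg
  by (intro sum_mono mult_left_mono) auto

lemma hit_within_Suc_expect_next:
  "hit_within V w r m (Suc n) X = (if X = V then 1 else expect_next V w r m (hit_within V w r m n) X)"
  by (simp add: expect_next_def)

declare hit_within.simps(2) [simp del]

lemma hit_within_bounds:
  assumes fg: "fitness_graph V E w r m"
  shows "X \<subseteq> V \<Longrightarrow> 0 \<le> hit_within V w r m n X \<and> hit_within V w r m n X \<le> 1"
proof (induction n arbitrary: X)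
  case (Suc n)
  have "expect_next V w r m (\<lambda>_. 0) X \<le> expect_next V w r m (hit_within V w r m n) X"
    and "expect_next V w r m (hit_within V w r m n) X \<le> expect_next V w r m (\<lambda>_. 1) X"
    using Suc.IH by (auto intro!: expect_next_mono[OF fg])
  then show ?case
    using expect_next_const[OF fg Suc.prems] by (simp add: hit_within_Suc_expect_next)
qed simp

lemma hit_within_Suc_mono:
  assumes fg: "fitness_graph V E w r m"
  shows "X \<subseteq> V \<Longrightarrow> hit_within V w r m n X \<le> hit_within V w r m (Suc n) X"
proof (induction n arbitrary: X)
  case 0
  then show ?case
    using hit_within_bounds[OF fg 0, of "Suc 0"]
    by (cases "X = V") (simp_all add: hit_within_Suc_expect_next)
next
  case (Suc n)
  then show ?case
    by (simp add: hit_within_Suc_expect_next expect_next_mono[OF fg])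
qed

lemma hit_within_tendsto_fp:
  assumes fg: "fitness_graph V E w r m" and X: "X \<subseteq> V"
  shows "(\<lambda>n. hit_within V w r m n X) \<longlonglongrightarrow> fp V w r m X"
  unfolding fp_def using hit_within_bounds[OF fg X] hit_within_Suc_mono[OF fg X]
  by (intro LIMSEQ_incseq_SUP bdd_aboveI[of _ 1] incseq_SucI) auto

lemma fp_nonneg:
  assumes fg: "fitness_graph V E w r m" and X: "X \<subseteq> V"
  shows "0 \<le> fp V w r m X"
  using hit_within_tendsto_fp[OF fg X]
  by (rule LIMSEQ_le_const) (use hit_within_bounds[OF fg X] in blast)

lemma fp_top: "fp V w r m V = 1"
proof -
  have "hit_within V w r m n V = 1" for n
    by (cases n) (simp_all add: hit_within_Suc_expect_next)
  then show ?thesis unfolding fp_def by simp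
qed

lemma fp_harmonic:
  assumes fg: "fitness_graph V E w r m" and X: "X \<subseteq> V"
  shows "expect_next V w r m (fp V w r m) X = fp V w r m X"
proof (cases "X = V")
  case False
  have "(\<lambda>n. hit_within V w r m (Suc n) X) \<longlonglongrightarrow> expect_next V w r m (fp V w r m) X"
    unfolding hit_within_Suc_expect_next expect_next_def using False
    by (auto intro!: tendsto_sum tendsto_mult_left hit_within_tendsto_fp[OF fg])
  moreover have "(\<lambda>n. hit_within V w r m (Suc n) X) \<longlonglongrightarrow> fp V w r m X"
    using hit_within_tendsto_fp[OF fg X] by (rule LIMSEQ_Suc)
  ultimately show ?thesis by (rule LIMSEQ_unique)
qed (simp add: expect_next_top[OF fg])

lemma fp_le_superharmonic:
  assumes fg: "fitness_graph V E w r m" and S: "S \<subseteq> V"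
    and nonneg: "\<And>X. X \<subseteq> V \<Longrightarrow> 0 \<le> \<psi> X" and top: "\<psi> V = 1"
    and super: "\<And>X. X \<subseteq> V \<Longrightarrow> X \<noteq> V \<Longrightarrow> expect_next V w r m \<psi> X \<le> \<psi> X"
  shows "fp V w r m S \<le> \<psi> S"
proof -
  have "hit_within V w r m n X \<le> \<psi> X" if "X \<subseteq> V" for n X
    using that
  proof (induction n arbitrary: X)
    case 0
    then show ?case using nonneg top by simp
  next
    case (Suc n)
    show ?case
    proof (cases "X = V")
      case False
      have "expect_next V w r m (hit_within V w r m n) X \<le> expect_next V w r m \<psi> X"
        using Suc.IH by (intro expect_next_mono[OF fg])
      with False show ?thesis using super[OF Suc.prems] by (simp add: hit_within_Suc_expect_next)
    qed (simp add: top hit_within_Suc_expect_next)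
  qed
  then show ?thesis
    unfolding fp_def using S by (intro cSUP_least) auto
qed

definition mono_minorant :: "'v set \<Rightarrow> ('v set \<Rightarrow> real) \<Rightarrow> 'v set \<Rightarrow> real"
  where "mono_minorant V \<phi> Z = Min (\<phi> ` {Y. Z \<subseteq> Y \<and> Y \<subseteq> V})"

lemma finite_supersets: "finite V \<Longrightarrow> finite {Y. Z \<subseteq> Y \<and> Y \<subseteq> V}"
  by (rule finite_subset[of _ "Pow V"]) auto

lemma mono_minorant_le:
  "finite V \<Longrightarrow> Z \<subseteq> Y \<Longrightarrow> Y \<subseteq> V \<Longrightarrow> mono_minorant V \<phi> Z \<le> \<phi> Y"
  unfolding mono_minorant_def by (intro Min_le finite_imageI finite_supersets) auto

lemma mono_minorant_attained:
  assumes "finite V" and "Z \<subseteq> V"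
  obtains Y where "Z \<subseteq> Y" "Y \<subseteq> V" "mono_minorant V \<phi> Z = \<phi> Y"
proof -
  have "mono_minorant V \<phi> Z \<in> \<phi> ` {Y. Z \<subseteq> Y \<and> Y \<subseteq> V}"
    unfolding mono_minorant_def using assms
    by (intro Min_in finite_imageI finite_supersets) auto
  then show ?thesis using that by blast
qed

lemma mono_minorant_mono:
  assumes "finite V" and "A \<subseteq> B" and "B \<subseteq> V"
  shows "mono_minorant V \<phi> A \<le> mono_minorant V \<phi> B"
proof -
  obtain Y where "B \<subseteq> Y" "Y \<subseteq> V" "mono_minorant V \<phi> B = \<phi> Y"
    using mono_minorant_attained assms(1,3) .
  then show ?thesis using mono_minorant_le[OF assms(1)] assms(2) by force
qed

lemma mono_minorant_top: "finite V \<Longrightarrow> mono_minorant V \<phi> V = \<phi> V"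
  by (metis mono_minorant_attained subset_antisym subset_refl)

text \<open>The Moran step with time uniformised (and scaled by the total rate
  \<open>\<Sum>u\<in>V. r u + m u\<close>): every vertex u carries a resident clock of rate r u and a
  mutant clock of rate m u, and a ring places an offspring of u on v only if the clock
  matches the type of u.\<close>

definition lazy_step ::
  "'v set \<Rightarrow> ('v \<Rightarrow> 'v \<Rightarrow> real) \<Rightarrow> ('v \<Rightarrow> real) \<Rightarrow> ('v \<Rightarrow> real) \<Rightarrow> ('v set \<Rightarrow> real) \<Rightarrow> 'v set \<Rightarrow> real"
  where "lazy_step V w r m \<phi> X = (\<Sum>u\<in>V. \<Sum>v\<in>V. w u v *
    (r u * \<phi> (if u \<in> X then X else X - {v}) + m u * \<phi> (if u \<in> X then insert v X else X)))"

lemma lazy_step_mono: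
  assumes fg: "fitness_graph V E w r m"
    and mono: "\<And>A B. A \<subseteq> B \<Longrightarrow> B \<subseteq> V \<Longrightarrow> \<phi> A \<le> \<phi> B"
    and XY: "X \<subseteq> Y" "Y \<subseteq> V"
  shows "lazy_step V w r m \<phi> X \<le> lazy_step V w r m \<phi> Y"
  unfolding lazy_step_def using fitness_graphD(3,5,6)[OF fg] XY
  by (intro sum_mono mult_left_mono add_mono mono) (auto intro: less_imp_le)

lemma lazy_step_eq:
  assumes fg: "fitness_graph V E w r m" and X: "X \<subseteq> V"
  shows "lazy_step V w r m \<phi> X = ((\<Sum>u\<in>V. r u + m u) - total_fit V r m X) * \<phi> X
    + total_fit V r m X * expect_next V w r m \<phi> X"
proof -
  have "lazy_step V w r m \<phi> X = (\<Sum>u\<in>V. (r u + m u - fit r m X u) * \<phi> X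
      + fit r m X u * (\<Sum>v\<in>V. w u v * \<phi> (moran_update X u v)))"
    unfolding lazy_step_def
  proof (intro sum.cong refl)
    fix u assume u: "u \<in> V"
    have avg_const: "(\<Sum>v\<in>V. w u v * c) = c" for c
      using fitness_graphD(4)[OF fg u] by (simp add: sum_distrib_right[symmetric])
    show "(\<Sum>v\<in>V. w u v * (r u * \<phi> (if u \<in> X then X else X - {v})
        + m u * \<phi> (if u \<in> X then insert v X else X)))
      = (r u + m u - fit r m X u) * \<phi> X
        + fit r m X u * (\<Sum>v\<in>V. w u v * \<phi> (moran_update X u v))"
      using avg_const[of "r u * \<phi> X"] avg_const[of "m u * \<phi> X"]
      by (cases "u \<in> X")
        (simp_all add: fit_def moran_update_def distrib_left sum.distrib sum_distrib_left
          mult.left_commute)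
  qed
  also have "\<dots> = ((\<Sum>u\<in>V. r u + m u) - total_fit V r m X) * \<phi> X
      + total_fit V r m X * expect_next V w r m \<phi> X"
    unfolding total_fit_mult_expect_next[OF fg X]
    by (simp add: total_fit_def sum.distrib sum_subtractf sum_distrib_left sum_distrib_right
        algebra_simps)
  finally show ?thesis .
qed

lemma mono_minorant_fp_superharmonic:
  assumes fg: "fitness_graph V E w r m" and X: "X \<subseteq> V"
  shows "expect_next V w r m (mono_minorant V (fp V w r m)) X \<le> mono_minorant V (fp V w r m) X"
proof -
  define \<psi> where "\<psi> = mono_minorant V (fp V w r m)"
  let ?L = "\<Sum>u\<in>V. r u + m u"
  let ?F = "total_fit V r m"
  let ?E = "expect_next V w r m"
  have fin: "finite V" using fitness_graphD(1)[OF fg] .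
  have \<psi>_le_fp: "\<psi> Y \<le> fp V w r m Y" if "Y \<subseteq> V" for Y
    unfolding \<psi>_def using mono_minorant_le[OF fin subset_refl that] .
  obtain Y where XY: "X \<subseteq> Y" "Y \<subseteq> V" and \<psi>X: "\<psi> X = fp V w r m Y"
    unfolding \<psi>_def using mono_minorant_attained[OF fin X] .
  have "(?L - ?F X) * \<psi> X + ?F X * ?E \<psi> X = lazy_step V w r m \<psi> X"
    using lazy_step_eq[OF fg X] by simp
  also have "\<dots> \<le> lazy_step V w r m \<psi> Y"
    unfolding \<psi>_def using fin by (intro lazy_step_mono[OF fg _ XY] mono_minorant_mono)
  also have "\<dots> = (?L - ?F Y) * \<psi> Y + ?F Y * ?E \<psi> Y"
    using lazy_step_eq[OF fg XY(2)] .
  also have "\<dots> \<le> (?L - ?F Y) * fp V w r m Y + ?F Y * ?E (fp V w r m) Y"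
    using total_fit_le[OF fg, of Y] total_fit_pos[OF fg, of Y] \<psi>_le_fp XY(2)
    by (intro add_mono mult_left_mono expect_next_mono[OF fg]) auto
  also have "\<dots> = ?L * \<psi> X"
    using fp_harmonic[OF fg XY(2)] \<psi>X by (simp add: algebra_simps)
  finally have "?F X * ?E \<psi> X \<le> ?F X * \<psi> X"
    by (simp add: algebra_simps)
  then show ?thesis
    unfolding \<psi>_def using total_fit_pos[OF fg, of X] by simp
qed

theorem corollary2:
  fixes V :: "'v set" and E :: "('v \<times> 'v) set" and w :: "'v \<Rightarrow> 'v \<Rightarrow> real"
    and r m :: "'v \<Rightarrow> real" and S S' :: "'v set"
  assumes "fitness_graph V E w r m"
    and "S \<subseteq> S'" and "S' \<subseteq> V"
  shows "fp V w r m S \<le> fp V w r m S'"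
proof -
  note fg = assms(1)
  have fin: "finite V" using fitness_graphD(1)[OF fg] .
  let ?\<psi> = "mono_minorant V (fp V w r m)"
  have "fp V w r m S \<le> ?\<psi> S"
  proof (rule fp_le_superharmonic[OF fg])
    show "S \<subseteq> V" using assms(2,3) by (rule subset_trans)
    show "0 \<le> ?\<psi> X" if "X \<subseteq> V" for X
      using mono_minorant_attained[OF fin that] fp_nonneg[OF fg] by metis
    show "?\<psi> V = 1" by (simp add: mono_minorant_top[OF fin] fp_top)
    show "expect_next V w r m ?\<psi> X \<le> ?\<psi> X" if "X \<subseteq> V" for X
      using mono_minorant_fp_superharmonic[OF fg that] .
  qed
  also have "?\<psi> S \<le> fp V w r m S'"
    using mono_minorant_le[OF fin assms(2,3)] .
  finally show ?thesis .
qed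

end
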